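(* Let $\pi\in\Pi$, $\alpha<\beta$ and $\delta>0$ with $d_\Xi(\Xi^\pi(\alpha),\Xi^\pi(\beta))\le\delta$, and let $\theta=d_k(\pi(\alpha),\pi(\beta))$ (so $\theta\le\delta$). Let $\tilde\pi\in\Pi$ be any strategy that coincides with $\pi$ on $[0,\beta]$ and on $[\beta,\beta+\theta]$ performs the canonical transition from $\pi(\beta)$ to $\pi(\alpha)$: each robot $r$ moves at unit speed along a fixed shortest path from $\pi_r(\beta)$ to $\pi_r(\alpha)$ and then waits there until time $\beta+\theta$. Then, with $\Gamma=[\alpha,\beta+\theta]$, $$\tilde\pi_r(\beta+\theta)=\pi_r(\alpha)\ \ \forall r,\qquad \sup_{t\in\Gamma}M^{\tilde\pi}(t)\le\sup_{t\in[\alpha,\beta]}M^\pi(t)+\phi_{\max}\delta.$$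
   Context: Let $G=(V,E,A,\phi)$ be a finite connected undirected graph with node set $V$, edge set $E$, edge lengths $A:E\to\mathbb{R}_{>0}$, node weights $\phi:V\to\mathbb{R}_{>0}$, $\phi_{\max}=\max_v\phi(v)$; $|G|$ its metric graph with shortest-path metric $d$. Fix $k\ge1$ robots; $d_k(p,p')=\max_i d(p_i,p'_i)$; $\Pi=\{\pi\in C([0,\infty),|G|^k): d_k(\pi(t),\pi(t'))\le|t-t'|\}$. For $v\in V$, $t\ge0$: $\tau^\pi(v,t)=\sup\{t'\le t:\pi_r(t')=v\text{ for some }r\}$ if nonempty, else $0$; $L^\pi_v(t)=t-\tau^\pi(v,t)$; $M^\pi(t)=\max_v\phi(v)L^\pi_v(t)$. Joint state $\Xi^\pi(t)=(\pi(t),(L^\pi_v(t))_{v\in V})$ with metric $d_\Xi((p,L),(p',L'))=\max\{d_k(p,p'),\max_v|L_v-L'_v|\}$. *)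

theory Defs
  imports Complex_Main
begin

(* A weighted graph G = (V,E,A,phi): nodes, abstract edges with an endpoint map,
   edge lengths A = len, node weights phi = wt. *)
record ('v,'e) mgraph =
  nodes :: "'v set"
  edges :: "'e set"
  ends  :: "'e \<Rightarrow> 'v \<times> 'v"
  len   :: "'e \<Rightarrow> real"
  wt    :: "'v \<Rightarrow> real"

fun walk :: "('v,'e) mgraph \<Rightarrow> 'v \<Rightarrow> 'e list \<Rightarrow> 'v \<Rightarrow> bool" where
  "walk G u [] v = (u = v)"
| "walk G u (e # es) v =
     (e \<in> edges G \<and> (\<exists>w. (ends G e = (u, w) \<or> ends G e = (w, u)) \<and> walk G w es v))"

definition wf_graph :: "('v,'e) mgraph \<Rightarrow> bool" where
  "wf_graph G \<longleftrightarrow>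
     finite (nodes G) \<and> nodes G \<noteq> {} \<and> finite (edges G) \<and>
     (\<forall>e\<in>edges G. fst (ends G e) \<in> nodes G \<and> snd (ends G e) \<in> nodes G
                    \<and> fst (ends G e) \<noteq> snd (ends G e) \<and> len G e > 0) \<and>
     inj_on (\<lambda>e. {fst (ends G e), snd (ends G e)}) (edges G) \<and>
     (\<forall>v\<in>nodes G. wt G v > 0) \<and>
     (\<forall>u\<in>nodes G. \<forall>v\<in>nodes G. \<exists>es. walk G u es v)"

definition node_dist :: "('v,'e) mgraph \<Rightarrow> 'v \<Rightarrow> 'v \<Rightarrow> real" where
  "node_dist G u v = Inf {sum_list (map (len G) es) | es. walk G u es v}"

(* points of the metric graph |G|: a node, or an interior point of an edge e at
   distance x (0 < x < len e) from fst (ends e) *)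
datatype ('v,'e) pt = Node 'v | Inner 'e real

definition pts :: "('v,'e) mgraph \<Rightarrow> ('v,'e) pt set" where
  "pts G = Node ` nodes G \<union> {Inner e x | e x. e \<in> edges G \<and> 0 < x \<and> x < len G e}"

fun anchors :: "('v,'e) mgraph \<Rightarrow> ('v,'e) pt \<Rightarrow> ('v \<times> real) set" where
  "anchors G (Node v) = {(v, 0)}"
| "anchors G (Inner e x) = {(fst (ends G e), x), (snd (ends G e), len G e - x)}"

definition dist_via :: "('v,'e) mgraph \<Rightarrow> ('v,'e) pt \<Rightarrow> ('v,'e) pt \<Rightarrow> real" where
  "dist_via G p q =
     Min ((\<lambda>((u,a),(w,b)). a + node_dist G u w + b) ` (anchors G p \<times> anchors G q))"

fun gdist :: "('v,'e) mgraph \<Rightarrow> ('v,'e) pt \<Rightarrow> ('v,'e) pt \<Rightarrow> real" where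
  "gdist G (Inner e x) (Inner e' y) =
     (if e = e' then min \<bar>x - y\<bar> (dist_via G (Inner e x) (Inner e' y))
      else dist_via G (Inner e x) (Inner e' y))"
| "gdist G p q = dist_via G p q"

(* configurations of k robots: robots indexed by r < k *)
definition dk :: "('v,'e) mgraph \<Rightarrow> nat \<Rightarrow> (nat \<Rightarrow> ('v,'e) pt) \<Rightarrow> (nat \<Rightarrow> ('v,'e) pt) \<Rightarrow> real" where
  "dk G k p p' = Max ((\<lambda>i. gdist G (p i) (p' i)) ` {..<k})"

(* the strategy set Pi: 1-Lipschitz maps [0,oo) -> |G|^k (continuity follows) *)
definition strategy :: "('v,'e) mgraph \<Rightarrow> nat \<Rightarrow> (real \<Rightarrow> nat \<Rightarrow> ('v,'e) pt) \<Rightarrow> bool" where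
  "strategy G k \<pi> \<longleftrightarrow>
     (\<forall>t\<ge>0. \<forall>r<k. \<pi> t r \<in> pts G) \<and>
     (\<forall>t t'. t \<ge> 0 \<longrightarrow> t' \<ge> 0 \<longrightarrow> dk G k (\<pi> t) (\<pi> t') \<le> \<bar>t - t'\<bar>)"

definition last_visit :: "nat \<Rightarrow> (real \<Rightarrow> nat \<Rightarrow> ('v,'e) pt) \<Rightarrow> 'v \<Rightarrow> real \<Rightarrow> real" where
  "last_visit k \<pi> v t =
     (let S = {t'. 0 \<le> t' \<and> t' \<le> t \<and> (\<exists>r<k. \<pi> t' r = Node v)} in
      if S \<noteq> {} then Sup S else 0)"

definition latency :: "nat \<Rightarrow> (real \<Rightarrow> nat \<Rightarrow> ('v,'e) pt) \<Rightarrow> 'v \<Rightarrow> real \<Rightarrow> real" where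
  "latency k \<pi> v t = t - last_visit k \<pi> v t"

definition Mcost :: "('v,'e) mgraph \<Rightarrow> nat \<Rightarrow> (real \<Rightarrow> nat \<Rightarrow> ('v,'e) pt) \<Rightarrow> real \<Rightarrow> real" where
  "Mcost G k \<pi> t = Max ((\<lambda>v. wt G v * latency k \<pi> v t) ` nodes G)"

definition phi_max :: "('v,'e) mgraph \<Rightarrow> real" where
  "phi_max G = Max (wt G ` nodes G)"

definition dXi :: "('v,'e) mgraph \<Rightarrow> nat \<Rightarrow> (real \<Rightarrow> nat \<Rightarrow> ('v,'e) pt) \<Rightarrow> real \<Rightarrow> real \<Rightarrow> real" where
  "dXi G k \<pi> a b =
     max (dk G k (\<pi> a) (\<pi> b))
         (Max ((\<lambda>v. \<bar>latency k \<pi> v a - latency k \<pi> v b\<bar>) ` nodes G))"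

definition geodesic :: "('v,'e) mgraph \<Rightarrow> (real \<Rightarrow> ('v,'e) pt) \<Rightarrow> ('v,'e) pt \<Rightarrow> ('v,'e) pt \<Rightarrow> bool" where
  "geodesic G \<gamma> p q \<longleftrightarrow>
     \<gamma> 0 = p \<and> \<gamma> (gdist G p q) = q \<and>
     (\<forall>s\<in>{0..gdist G p q}. \<gamma> s \<in> pts G) \<and>
     (\<forall>s\<in>{0..gdist G p q}. \<forall>s'\<in>{0..gdist G p q}. gdist G (\<gamma> s) (\<gamma> s') = \<bar>s - s'\<bar>)"

end

theory Submission
  imports Defs
begin

(* After beta the last-visit times can only increase, so every latency grows by at most the
   elapsed time and M on [beta, beta + theta] exceeds M(beta) by at most phi_max theta, whatever
   the continuation does; of the hypothesis on d_Xi only theta <= delta is needed.  The endpoint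
   claim holds because each robot's geodesic has length d(pi_r(beta), pi_r(alpha)) <= theta. *)

lemma walk_edges_subset: "walk G u es w \<Longrightarrow> set es \<subseteq> edges G"
  by (induction es arbitrary: u) auto

lemma node_dist_nonneg:
  assumes "wf_graph G" "u \<in> nodes G" "w \<in> nodes G"
  shows "0 \<le> node_dist G u w"
  unfolding node_dist_def
proof (rule cInf_greatest)
  show "{sum_list (map (len G) es) |es. walk G u es w} \<noteq> {}"
    using assms unfolding wf_graph_def by blast
next
  fix x assume "x \<in> {sum_list (map (len G) es) |es. walk G u es w}"
  then obtain es where x: "x = sum_list (map (len G) es)" and es: "walk G u es w" by blast
  have "\<forall>e\<in>set es. 0 < len G e"
    using walk_edges_subset[OF es] assms(1) unfolding wf_graph_def by blast
  then show "0 \<le> x"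
    unfolding x by (intro sum_list_nonneg) auto
qed

lemma anchors_nodes_nonneg:
  assumes "wf_graph G" "p \<in> pts G" "(u, a) \<in> anchors G p"
  shows "u \<in> nodes G" "0 \<le> a"
  using assms unfolding pts_def wf_graph_def by (cases p; auto)+

lemma anchors_finite_nonempty: "finite (anchors G p)" "anchors G p \<noteq> {}"
  by (cases p; simp)+

lemma dist_via_nonneg:
  assumes "wf_graph G" "p \<in> pts G" "q \<in> pts G"
  shows "0 \<le> dist_via G p q"
proof -
  have "0 \<le> a + node_dist G u w + b"
    if "(u, a) \<in> anchors G p" "(w, b) \<in> anchors G q" for u a w b
    using anchors_nodes_nonneg[OF assms(1,2) that(1)] anchors_nodes_nonneg[OF assms(1,3) that(2)]
      node_dist_nonneg[OF assms(1)] by fastforce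
  then show ?thesis
    using anchors_finite_nonempty[of G p] anchors_finite_nonempty[of G q]
    unfolding dist_via_def by (subst Min_ge_iff) auto
qed

lemma gdist_nonneg:
  assumes "wf_graph G" "p \<in> pts G" "q \<in> pts G"
  shows "0 \<le> gdist G p q"
  using dist_via_nonneg[OF assms] by (cases p; cases q) auto

lemma gdist_le_dk: "r < k \<Longrightarrow> gdist G (p r) (q r) \<le> dk G k p q"
  unfolding dk_def by (intro Max_ge) auto

lemma dk_nonneg:
  assumes "wf_graph G" "1 \<le> k" "p 0 \<in> pts G" "q 0 \<in> pts G"
  shows "0 \<le> dk G k p q"
  using gdist_nonneg[OF assms(1,3,4)] gdist_le_dk[of 0 k G p q] assms(2) by simp

(* Symmetry of gdist in general would need reversal of walks; a geodesic already witnesses it. *)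
lemma geodesic_gdist_commute:
  assumes "geodesic G \<gamma> p q" "0 \<le> gdist G p q"
  shows "gdist G q p = gdist G p q"
proof -
  let ?D = "gdist G p q"
  have ends: "\<gamma> 0 = p" "\<gamma> ?D = q"
    and isometric: "\<forall>s\<in>{0..?D}. \<forall>s'\<in>{0..?D}. gdist G (\<gamma> s) (\<gamma> s') = \<bar>s - s'\<bar>"
    using assms(1) unfolding geodesic_def by auto
  have "gdist G (\<gamma> ?D) (\<gamma> 0) = ?D"
    using isometric assms(2) by auto
  then show ?thesis
    unfolding ends .
qed

lemma wf_graph_wt_pos: "wf_graph G \<Longrightarrow> v \<in> nodes G \<Longrightarrow> 0 < wt G v"
  unfolding wf_graph_def by blast

lemma wt_le_phi_max: "wf_graph G \<Longrightarrow> v \<in> nodes G \<Longrightarrow> wt G v \<le> phi_max G"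
  unfolding phi_max_def wf_graph_def by (intro Max_ge) auto

lemma phi_max_pos:
  assumes "wf_graph G" shows "0 < phi_max G"
proof -
  obtain v where "v \<in> nodes G" using assms unfolding wf_graph_def by blast
  then show ?thesis
    using wf_graph_wt_pos wt_le_phi_max assms by fastforce
qed

lemma last_visit_nonneg:
  assumes "0 \<le> t" shows "0 \<le> last_visit k \<pi> v t"
proof -
  let ?S = "{t'. 0 \<le> t' \<and> t' \<le> t \<and> (\<exists>r<k. \<pi> t' r = Node v)}"
  have "0 \<le> Sup ?S" if "x \<in> ?S" for x
    using that by (intro order.trans[OF _ cSup_upper[OF that]] bdd_aboveI[of _ t]) auto
  then show ?thesis
    unfolding last_visit_def Let_def by auto
qed

lemma last_visit_mono:
  assumes "0 \<le> s" "s \<le> t" shows "last_visit k \<pi> v s \<le> last_visit k \<pi> v t"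
proof -
  let ?S = "{t'. 0 \<le> t' \<and> t' \<le> s \<and> (\<exists>r<k. \<pi> t' r = Node v)}"
  let ?T = "{t'. 0 \<le> t' \<and> t' \<le> t \<and> (\<exists>r<k. \<pi> t' r = Node v)}"
  show ?thesis
  proof (cases "?S = {}")
    case True
    then show ?thesis
      using last_visit_nonneg[of t k \<pi> v] assms unfolding last_visit_def Let_def by simp
  next
    case False
    have "?S \<subseteq> ?T" using assms by auto
    moreover have "bdd_above ?T" by (rule bdd_aboveI[of _ t]) auto
    ultimately have "Sup ?S \<le> Sup ?T" using False by (intro cSup_subset_mono)
    then show ?thesis
      using False \<open>?S \<subseteq> ?T\<close> unfolding last_visit_def Let_def by auto
  qed
qed

lemma last_visit_cong:
  assumes "\<forall>t'\<in>{0..b}. \<forall>r<k. \<pi>' t' r = \<pi> t' r" "t \<le> b"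
  shows "last_visit k \<pi>' v t = last_visit k \<pi> v t"
proof -
  have "{t'. 0 \<le> t' \<and> t' \<le> t \<and> (\<exists>r<k. \<pi>' t' r = Node v)} =
        {t'. 0 \<le> t' \<and> t' \<le> t \<and> (\<exists>r<k. \<pi> t' r = Node v)}"
    using assms by auto
  then show ?thesis
    unfolding last_visit_def by simp
qed

lemma latency_le_add_elapsed:
  "0 \<le> s \<Longrightarrow> s \<le> t \<Longrightarrow> latency k \<pi> v t \<le> latency k \<pi> v s + (t - s)"
  using last_visit_mono[of s t k \<pi> v] unfolding latency_def by simp

lemma wt_latency_le_Mcost:
  "wf_graph G \<Longrightarrow> v \<in> nodes G \<Longrightarrow> wt G v * latency k \<pi> v t \<le> Mcost G k \<pi> t"
  unfolding Mcost_def wf_graph_def by (intro Max_ge) auto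

lemma Mcost_cong:
  assumes "\<forall>t'\<in>{0..b}. \<forall>r<k. \<pi>' t' r = \<pi> t' r" "t \<le> b"
  shows "Mcost G k \<pi>' t = Mcost G k \<pi> t"
  unfolding Mcost_def latency_def using last_visit_cong[OF assms] by simp

lemma Mcost_le_add_elapsed:
  assumes "wf_graph G" "0 \<le> s" "s \<le> t"
  shows "Mcost G k \<pi> t \<le> Mcost G k \<pi> s + phi_max G * (t - s)"
proof -
  have "wt G v * latency k \<pi> v t \<le> Mcost G k \<pi> s + phi_max G * (t - s)"
    if v: "v \<in> nodes G" for v
  proof -
    have "wt G v * latency k \<pi> v t \<le> wt G v * latency k \<pi> v s + wt G v * (t - s)"
      using latency_le_add_elapsed[OF assms(2,3)] wf_graph_wt_pos[OF assms(1) v]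
      by (simp add: distrib_left[symmetric])
    also have "\<dots> \<le> Mcost G k \<pi> s + phi_max G * (t - s)"
      using wt_latency_le_Mcost[OF assms(1) v] wt_le_phi_max[OF assms(1) v] assms(3)
      by (intro add_mono mult_right_mono) auto
    finally show ?thesis .
  qed
  then show ?thesis
    using assms(1) unfolding Mcost_def wf_graph_def by (subst Max_le_iff) auto
qed

lemma bdd_above_Mcost:
  assumes "wf_graph G" "0 \<le> a"
  shows "bdd_above (Mcost G k \<pi> ` {a..b})"
proof (rule bdd_aboveI2)
  fix t assume "t \<in> {a..b}"
  then have "Mcost G k \<pi> t \<le> Mcost G k \<pi> 0 + phi_max G * (t - 0)"
    using Mcost_le_add_elapsed[OF assms(1), of 0 t] assms(2) by simp
  also have "\<dots> \<le> Mcost G k \<pi> 0 + phi_max G * b"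
    using \<open>t \<in> {a..b}\<close> phi_max_pos[OF assms(1)] by simp
  finally show "Mcost G k \<pi> t \<le> Mcost G k \<pi> 0 + phi_max G * b" .
qed

lemma SUP_Mcost_continuation_le:
  assumes "wf_graph G" "0 \<le> \<alpha>" "\<alpha> \<le> \<beta>" "0 \<le> \<theta>"
    and agree: "\<forall>t\<in>{0..\<beta>}. \<forall>r<k. \<pi>' t r = \<pi> t r"
  shows "(SUP t\<in>{\<alpha>..\<beta>+\<theta>}. Mcost G k \<pi>' t)
           \<le> (SUP t\<in>{\<alpha>..\<beta>}. Mcost G k \<pi> t) + phi_max G * \<theta>"
proof (rule cSUP_least)
  show "{\<alpha>..\<beta> + \<theta>} \<noteq> {}" using assms(3,4) by simp
next
  let ?S = "SUP t\<in>{\<alpha>..\<beta>}. Mcost G k \<pi> t"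
  have le_S: "Mcost G k \<pi> t \<le> ?S" if "t \<in> {\<alpha>..\<beta>}" for t
    using bdd_above_Mcost[OF assms(1,2)] that by (rule cSUP_upper2) simp
  fix t assume t: "t \<in> {\<alpha>..\<beta> + \<theta>}"
  show "Mcost G k \<pi>' t \<le> ?S + phi_max G * \<theta>"
  proof (cases "t \<le> \<beta>")
    case True
    then have "Mcost G k \<pi>' t \<le> ?S"
      using Mcost_cong[OF agree True] le_S t by simp
    then show ?thesis
      using phi_max_pos[OF assms(1)] assms(4) by (simp add: add_increasing2)
  next
    case False
    have "Mcost G k \<pi>' t \<le> Mcost G k \<pi>' \<beta> + phi_max G * (t - \<beta>)"
      using Mcost_le_add_elapsed[OF assms(1)] assms(2,3) False by simp
    also have "\<dots> \<le> ?S + phi_max G * \<theta>"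
      using Mcost_cong[OF agree order.refl] le_S[of \<beta>] phi_max_pos[OF assms(1)] t assms(3)
      by (intro add_mono mult_left_mono) auto
    finally show ?thesis .
  qed
qed

theorem mainTheorem13:
  fixes G :: "('v,'e) mgraph" and k :: nat
    and \<pi> \<pi>' :: "real \<Rightarrow> nat \<Rightarrow> ('v,'e) pt"
    and \<alpha> \<beta> \<delta> \<theta> :: real
  assumes "wf_graph G" and "k \<ge> 1"
    and "strategy G k \<pi>" and "strategy G k \<pi>'"
    and "0 \<le> \<alpha>" and "\<alpha> < \<beta>" and "\<delta> > 0"
    and "dXi G k \<pi> \<alpha> \<beta> \<le> \<delta>"
    and "\<theta> = dk G k (\<pi> \<alpha>) (\<pi> \<beta>)"
    and "\<forall>t\<in>{0..\<beta>}. \<forall>r<k. \<pi>' t r = \<pi> t r"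
    and "\<forall>r<k. \<exists>\<gamma>. geodesic G \<gamma> (\<pi> \<beta> r) (\<pi> \<alpha> r) \<and>
            (\<forall>s\<in>{0..\<theta>}. \<pi>' (\<beta> + s) r = \<gamma> (min s (gdist G (\<pi> \<beta> r) (\<pi> \<alpha> r))))"
  shows "(\<forall>r<k. \<pi>' (\<beta> + \<theta>) r = \<pi> \<alpha> r) \<and>
         (SUP t\<in>{\<alpha>..\<beta>+\<theta>}. Mcost G k \<pi>' t) \<le> (SUP t\<in>{\<alpha>..\<beta>}. Mcost G k \<pi> t) + phi_max G * \<delta>"
proof -
  have in_pts: "\<pi> t r \<in> pts G" if "r < k" "t \<in> {\<alpha>, \<beta>}" for t r
    using assms(3,5,6) that unfolding strategy_def by auto
  have \<theta>_nonneg: "0 \<le> \<theta>"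
    using dk_nonneg[OF assms(1,2)] in_pts assms(2,9) by simp
  have \<theta>_le_\<delta>: "\<theta> \<le> \<delta>"
    using assms(8,9) unfolding dXi_def by simp
  have "\<pi>' (\<beta> + \<theta>) r = \<pi> \<alpha> r" if r: "r < k" for r
  proof -
    obtain \<gamma> where \<gamma>: "geodesic G \<gamma> (\<pi> \<beta> r) (\<pi> \<alpha> r)"
      and moves: "\<forall>s\<in>{0..\<theta>}. \<pi>' (\<beta> + s) r = \<gamma> (min s (gdist G (\<pi> \<beta> r) (\<pi> \<alpha> r)))"
      using assms(11) r by blast
    have "gdist G (\<pi> \<beta> r) (\<pi> \<alpha> r) \<le> \<theta>"
      using geodesic_gdist_commute[OF \<gamma> gdist_nonneg[OF assms(1) in_pts[OF r] in_pts[OF r]]]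
        gdist_le_dk[OF r, of G "\<pi> \<alpha>" "\<pi> \<beta>"] assms(9) by simp
    then show ?thesis
      using moves \<theta>_nonneg \<gamma> unfolding geodesic_def by (simp add: min_absorb2)
  qed
  moreover have "(SUP t\<in>{\<alpha>..\<beta>+\<theta>}. Mcost G k \<pi>' t) \<le> (SUP t\<in>{\<alpha>..\<beta>}. Mcost G k \<pi> t) + phi_max G * \<theta>"
    using SUP_Mcost_continuation_le[OF assms(1,5) _ \<theta>_nonneg assms(10)] assms(6) by simp
  moreover have "phi_max G * \<theta> \<le> phi_max G * \<delta>"
    using \<theta>_le_\<delta> phi_max_pos[OF assms(1)] by simp
  ultimately show ?thesis by auto
qed

end
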